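(* Let $\mathcal{X}$ be a compact subset and $\mathcal{Y}$ a finite subset of a metric space $(\mathcal{S},\eta)$. Then every function $f:\mathcal{X}\to\mathcal{Y}$ is $L$-invertible.
   Context: Hausdorff distance: for nonempty subsets $\mathcal{A},\mathcal{B}$ of $(\mathcal{S},\eta)$, $\mathcal{H}(\mathcal{A},\mathcal{B}):=\max\{\sup_{a\in\mathcal{A}}\inf_{b\in\mathcal{B}}\eta(a,b),\sup_{b\in\mathcal{B}}\inf_{a\in\mathcal{A}}\eta(a,b)\}$. A function $f:\mathcal{X}\to\mathcal{Y}$ is $L$-invertible if there is a constant $L_{f^{-1}}\ge0$ such that $\mathcal{H}(f^{-1}(y^1),f^{-1}(y^2))\le L_{f^{-1}}\,\eta(y^1,y^2)$ for all $y^1,y^2\in f(\mathcal{X})$, where $f^{-1}(y)=\{x\in\mathcal{X}:f(x)=y\}$. *)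

theory Defs
  imports "HOL-Analysis.Analysis"
begin

text \<open>Hausdorff distance between nonempty subsets of a metric space, valued in the
extended reals (the supremum may be infinite in general), exactly as in the paper.\<close>
definition hausdorff_dist :: "'a::metric_space set \<Rightarrow> 'a set \<Rightarrow> ereal" where
  "hausdorff_dist A B =
     max (SUP a\<in>A. ereal (INF b\<in>B. dist a b)) (SUP b\<in>B. ereal (INF a\<in>A. dist a b))"

definition fibre :: "'a set \<Rightarrow> ('a \<Rightarrow> 'b) \<Rightarrow> 'b \<Rightarrow> 'a set" where
  "fibre X f y = {x \<in> X. f x = y}"

definition L_invertible :: "'a::metric_space set \<Rightarrow> ('a \<Rightarrow> 'b::metric_space) \<Rightarrow> bool" where
  "L_invertible X f \<longleftrightarrow> (\<exists>L\<ge>0. \<forall>y1\<in>f ` X. \<forall>y2\<in>f ` X.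
      hausdorff_dist (fibre X f y1) (fibre X f y2) \<le> ereal (L * dist y1 y2))"

end

theory Submission
  imports Defs
begin

text \<open>The fibres of f all lie in the bounded set X, so any two of them are at Hausdorff distance
at most diameter X; and the finitely many values of f are pairwise at distance at least some
\<delta> > 0. Hence L = diameter X / \<delta> is a Lipschitz constant for y \<mapsto> fibre X f y.\<close>

lemma SUP_INF_dist_le:
  fixes A B :: "'a::metric_space set"
  assumes "\<forall>a\<in>A. \<exists>b\<in>B. dist a b \<le> D"
  shows "(SUP a\<in>A. ereal (INF b\<in>B. dist a b)) \<le> ereal D"
proof (rule SUP_least)
  fix a assume "a \<in> A"
  then obtain b where "b \<in> B" "dist a b \<le> D" using assms by blast
  then have "(INF b\<in>B. dist a b) \<le> D"
    by (intro cINF_lower2) (auto intro: bdd_belowI[where m = 0])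
  then show "ereal (INF b\<in>B. dist a b) \<le> ereal D" by simp
qed

lemma hausdorff_dist_le:
  fixes A B :: "'a::metric_space set"
  assumes "\<forall>a\<in>A. \<exists>b\<in>B. dist a b \<le> D" and "\<forall>b\<in>B. \<exists>a\<in>A. dist a b \<le> D"
  shows "hausdorff_dist A B \<le> ereal D"
proof -
  have "\<forall>b\<in>B. \<exists>a\<in>A. dist b a \<le> D" using assms(2) by (simp add: dist_commute)
  then have "(SUP b\<in>B. ereal (INF a\<in>A. dist a b)) \<le> ereal D"
    using SUP_INF_dist_le[of B A D] by (simp add: dist_commute)
  then show ?thesis
    using SUP_INF_dist_le[OF assms(1)] by (simp add: hausdorff_dist_def)
qed

lemma hausdorff_dist_refl_le: "hausdorff_dist A A \<le> 0"
  using hausdorff_dist_le[of A A 0] by (force simp: zero_ereal_def)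

lemma hausdorff_dist_le_diameter:
  assumes "bounded S" "A \<subseteq> S" "B \<subseteq> S" "A \<noteq> {}" "B \<noteq> {}"
  shows "hausdorff_dist A B \<le> ereal (diameter S)"
  using assms by (intro hausdorff_dist_le) (meson all_not_in_conv diameter_bounded_bound subsetD)+

lemma finite_imp_uniformly_separated:
  fixes S :: "'a::metric_space set"
  assumes "finite S"
  obtains \<delta> where "\<delta> > 0" "\<And>x y. x \<in> S \<Longrightarrow> y \<in> S \<Longrightarrow> x \<noteq> y \<Longrightarrow> \<delta> \<le> dist x y"
proof
  define D where "D = case_prod dist ` {(x, y) \<in> S \<times> S. x \<noteq> y}"
  have "finite D"
    unfolding D_def using assms by (intro finite_imageI finite_subset[OF _ finite_cartesian_product]) auto
  moreover have "\<forall>d\<in>D. d > 0" unfolding D_def by auto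
  ultimately show "Min (insert 1 D) > 0" by simp
  fix x y assume "x \<in> S" "y \<in> S" "x \<noteq> y"
  then have "dist x y \<in> D" unfolding D_def by auto
  then show "Min (insert 1 D) \<le> dist x y" using \<open>finite D\<close> by simp
qed

lemma L_invertible_if_finite_image:
  fixes X :: "'a::metric_space set" and f :: "'a \<Rightarrow> 'b::metric_space"
  assumes "bounded X" and "finite (f ` X)"
  shows "L_invertible X f"
proof -
  obtain \<delta> where \<delta>: "\<delta> > 0"
    and separated: "\<And>y1 y2. y1 \<in> f ` X \<Longrightarrow> y2 \<in> f ` X \<Longrightarrow> y1 \<noteq> y2 \<Longrightarrow> \<delta> \<le> dist y1 y2"
    using finite_imp_uniformly_separated[OF assms(2)] by blast
  define L where "L = diameter X / \<delta>"
  have "L \<ge> 0" unfolding L_def using \<delta> diameter_ge_0[OF assms(1)] by simp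
  moreover have "hausdorff_dist (fibre X f y1) (fibre X f y2) \<le> ereal (L * dist y1 y2)"
    if y1: "y1 \<in> f ` X" and y2: "y2 \<in> f ` X" for y1 y2
  proof (cases "y1 = y2")
    case True
    then show ?thesis using hausdorff_dist_refl_le by (simp add: zero_ereal_def)
  next
    case False
    have "hausdorff_dist (fibre X f y1) (fibre X f y2) \<le> ereal (diameter X)"
      using assms(1) y1 y2 by (intro hausdorff_dist_le_diameter) (auto simp: fibre_def)
    also have "diameter X = L * \<delta>" unfolding L_def using \<delta> by simp
    also have "L * \<delta> \<le> L * dist y1 y2"
      using separated[OF y1 y2 False] \<open>L \<ge> 0\<close> by (simp add: mult_left_mono)
    finally show ?thesis by simp
  qed
  ultimately show ?thesis unfolding L_invertible_def by blast
qed

theorem lemma5: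
  fixes X Y :: "'a::metric_space set" and f :: "'a \<Rightarrow> 'a"
  assumes "compact X" and "finite Y" and "f ` X \<subseteq> Y"
  shows "L_invertible X f"
  using assms by (intro L_invertible_if_finite_image compact_imp_bounded) (auto intro: finite_subset)

end
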